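(* Let $X$ be a real Hilbert space, let $L > 0$, and let $f\colon X \to \mathbb{R}$ be a Fréchet differentiable function whose gradient $\nabla f\colon X \to X$ satisfies, for every $n\ge 1$, all $x_1,\ldots,x_n \in X$ and all $\lambda_1,\ldots,\lambda_n \ge 0$ with $\sum_{i=1}^n \lambda_i = 1$, $$\Big\| \nabla f\Big(\sum_{i=1}^n \lambda_i x_i\Big) - \sum_{i=1}^n \lambda_i \nabla f(x_i)\Big\| \le \frac{L}{2}\sum_{1\le i<j\le n} \lambda_i\lambda_j \|x_i - x_j\|^2.$$ Then $f$ is twice (Fréchet) differentiable and its Hessian is $L$-Lipschitz continuous (with respect to the operator norm on bounded linear operators $X\to X$).
   Context: $\nabla f(x)\in X$ is the Riesz representative of the Fréchet derivative of $f$ at $x$. The Hessian is the Fréchet derivative of $\nabla f$, a map $X \to \mathcal{B}(X,X)$. *)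

theory Defs
  imports "HOL-Analysis.Analysis"
begin

end

theory Submission
  imports Defs
begin

(* For n = 2 the hypothesis says that g = \<nabla>f deviates from being affine on segments by at most
   L/2 \<lambda> (1 - \<lambda>) |a - b|^2. On rays x + t h this makes the difference quotients (g (x + t h) - g x) / t
   Lipschitz in t > 0, so they converge as t \<rightarrow> 0+ to D x h (dir_deriv x h) with
   |g (x + h) - g x - D x h| \<le> L/2 |h|^2, and the midpoint case makes D x additive, hence linear.
   Comparing the expansions of g around x and around y at the two points (x + y)/2 \<plusminus> v and using the
   parallelogram law gives |D x - D y| \<le> L |x - y|.
   Continuity of D x cannot come from the two-point inequality (every linear map satisfies it with
   L = 0); it comes from f: comparing first- and second-order expansions of f shows that g is
   bounded near every point, so D x is bounded, and then it is the Frechet derivative of g. *)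

lemma jensen_defect_two_points:
  fixes g :: "'a::real_normed_vector \<Rightarrow> 'b::real_normed_vector"
  assumes cond: "\<And>(n::nat) (x :: nat \<Rightarrow> 'a) (lam :: nat \<Rightarrow> real).
                 n \<ge> 1 \<Longrightarrow> (\<forall>i<n. lam i \<ge> 0) \<Longrightarrow> (\<Sum>i<n. lam i) = 1 \<Longrightarrow>
                 norm (g (\<Sum>i<n. lam i *\<^sub>R x i) - (\<Sum>i<n. lam i *\<^sub>R g (x i)))
                   \<le> L / 2 * (\<Sum>i<n. \<Sum>j\<in>{i<..<n}. lam i * lam j * (norm (x i - x j))\<^sup>2)"
    and "0 \<le> l" "l \<le> 1"
  shows "norm (g (l *\<^sub>R a + (1 - l) *\<^sub>R b) - (l *\<^sub>R g a + (1 - l) *\<^sub>R g b))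
    \<le> L / 2 * l * (1 - l) * (norm (a - b))\<^sup>2"
proof -
  define x where "x i = (if i = 0 then a else b)" for i :: nat
  define lam where "lam i = (if i = 0 then l else 1 - l)" for i :: nat
  have "{..<2::nat} = {0, 1}" "{0<..<2::nat} = {1}" "{1<..<2::nat} = {}"
    by auto
  then show ?thesis
    using cond[of 2 lam x] assms(2,3) by (simp add: x_def lam_def mult_ac)
qed

locale jensen_defect =
  fixes g :: "'a::real_normed_vector \<Rightarrow> 'b::{real_normed_vector, complete_space}"
    and L :: real
  assumes L_nonneg: "0 \<le> L"
    and jensen_defect: "\<And>a b l. 0 \<le> l \<Longrightarrow> l \<le> 1 \<Longrightarrow>
      norm (g (l *\<^sub>R a + (1 - l) *\<^sub>R b) - (l *\<^sub>R g a + (1 - l) *\<^sub>R g b))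
        \<le> L / 2 * l * (1 - l) * (norm (a - b))\<^sup>2"
begin

definition diff_quot :: "'a \<Rightarrow> 'a \<Rightarrow> real \<Rightarrow> 'b" where
  "diff_quot x h t = (1 / t) *\<^sub>R (g (x + t *\<^sub>R h) - g x)"

lemma diff_quot_diff_le:
  assumes "0 < s" "s \<le> t"
  shows "norm (diff_quot x h s - diff_quot x h t) \<le> L / 2 * (norm h)\<^sup>2 * (t - s)"
proof -
  define l where "l = s / t"
  have "0 < t" using assms by linarith
  then have l: "0 \<le> l" "l \<le> 1" "1 - l = (t - s) / t"
    using assms by (auto simp: l_def field_simps)
  have "x + s *\<^sub>R h = l *\<^sub>R (x + t *\<^sub>R h) + (1 - l) *\<^sub>R x"
    using \<open>0 < t\<close> by (simp add: l_def algebra_simps)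
  then have "diff_quot x h s - diff_quot x h t
      = (1 / s) *\<^sub>R (g (l *\<^sub>R (x + t *\<^sub>R h) + (1 - l) *\<^sub>R x) - (l *\<^sub>R g (x + t *\<^sub>R h) + (1 - l) *\<^sub>R g x))"
    using assms \<open>0 < t\<close> by (simp add: diff_quot_def l_def algebra_simps)
  also have "norm \<dots> = (1 / s) * norm (g (l *\<^sub>R (x + t *\<^sub>R h) + (1 - l) *\<^sub>R x) - (l *\<^sub>R g (x + t *\<^sub>R h) + (1 - l) *\<^sub>R g x))"
    using assms by simp
  also have "\<dots> \<le> (1 / s) * (L / 2 * l * (1 - l) * (norm (x + t *\<^sub>R h - x))\<^sup>2)"
    using assms l by (intro mult_left_mono jensen_defect) auto
  also have "\<dots> = L / 2 * (norm h)\<^sup>2 * (t - s)"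
    using assms \<open>0 < t\<close> by (simp add: l l_def power2_eq_square field_simps)
  finally show ?thesis .
qed

lemma diff_quot_lipschitz: "(L / 2 * (norm h)\<^sup>2)-lipschitz_on {0<..} (diff_quot x h)"
proof (rule lipschitz_onI)
  fix s t :: real
  assume "s \<in> {0<..}" "t \<in> {0<..}"
  then show "dist (diff_quot x h s) (diff_quot x h t) \<le> L / 2 * (norm h)\<^sup>2 * dist s t"
    using diff_quot_diff_le[of s t x h] diff_quot_diff_le[of t s x h]
    by (cases "s \<le> t") (auto simp: dist_norm norm_minus_commute)
qed (simp add: L_nonneg)

definition dir_deriv :: "'a \<Rightarrow> 'a \<Rightarrow> 'b" where
  "dir_deriv x h = Lim (at_right 0) (diff_quot x h)"

lemma diff_quot_tendsto: "(diff_quot x h \<longlongrightarrow> dir_deriv x h) (at_right 0)"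
proof -
  obtain l where "(diff_quot x h \<longlongrightarrow> l) (at_right 0)"
    using uniformly_continuous_on_extension_at_closure[of "{0<..}" "diff_quot x h" 0]
      lipschitz_on_uniformly_continuous[OF diff_quot_lipschitz] by auto
  then show ?thesis
    unfolding dir_deriv_def using tendsto_Lim trivial_limit_at_right_real by blast
qed

lemma dir_deriv_remainder:
  assumes "0 \<le> t"
  shows "norm (g (x + t *\<^sub>R h) - g x - t *\<^sub>R dir_deriv x h) \<le> L / 2 * (norm h)\<^sup>2 * t\<^sup>2"
proof (cases "t = 0")
  case False
  then have "0 < t" using assms by simp
  have "norm (diff_quot x h t - dir_deriv x h) \<le> L / 2 * (norm h)\<^sup>2 * t"
  proof (rule tendsto_upperbound)
    show "((\<lambda>s. norm (diff_quot x h t - diff_quot x h s)) \<longlongrightarrow> norm (diff_quot x h t - dir_deriv x h)) (at_right 0)"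
      by (intro tendsto_intros diff_quot_tendsto)
    show "\<forall>\<^sub>F s in at_right 0. norm (diff_quot x h t - diff_quot x h s) \<le> L / 2 * (norm h)\<^sup>2 * t"
      using eventually_at_right_real[OF \<open>0 < t\<close>]
    proof eventually_elim
      case (elim s)
      then have "norm (diff_quot x h t - diff_quot x h s) \<le> L / 2 * (norm h)\<^sup>2 * (t - s)"
        using diff_quot_diff_le[of s t x h] by (simp add: norm_minus_commute)
      also have "\<dots> \<le> L / 2 * (norm h)\<^sup>2 * t"
        using elim L_nonneg by (intro mult_left_mono) auto
      finally show ?case .
    qed
  qed simp
  moreover have "g (x + t *\<^sub>R h) - g x - t *\<^sub>R dir_deriv x h = t *\<^sub>R (diff_quot x h t - dir_deriv x h)"
    using \<open>0 < t\<close> by (simp add: diff_quot_def algebra_simps)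
  ultimately show ?thesis
    using \<open>0 < t\<close> by (simp add: power2_eq_square mult_left_mono mult.assoc)
qed simp

lemma dir_deriv_taylor: "norm (g y - g x - dir_deriv x (y - x)) \<le> L / 2 * (norm (y - x))\<^sup>2"
  using dir_deriv_remainder[of 1 x "y - x"] by simp

lemma dir_deriv_unique:
  assumes "\<And>t. 0 < t \<Longrightarrow> t \<le> 1 \<Longrightarrow> norm (g (x + t *\<^sub>R h) - g x - t *\<^sub>R v) \<le> K * t\<^sup>2"
  shows "dir_deriv x h = v"
proof -
  have "((\<lambda>t. diff_quot x h t - v) \<longlongrightarrow> 0) (at_right 0)"
  proof (rule Lim_null_comparison)
    show "\<forall>\<^sub>F t in at_right 0. norm (diff_quot x h t - v) \<le> K * t"
      using eventually_at_right_real[OF zero_less_one]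
    proof eventually_elim
      case (elim t)
      then have "diff_quot x h t - v = (1 / t) *\<^sub>R (g (x + t *\<^sub>R h) - g x - t *\<^sub>R v)"
        by (simp add: diff_quot_def algebra_simps)
      then have "norm (diff_quot x h t - v) = norm (g (x + t *\<^sub>R h) - g x - t *\<^sub>R v) / t"
        using elim by simp
      also have "\<dots> \<le> K * t\<^sup>2 / t"
        using assms[of t] elim by (simp add: divide_right_mono)
      finally show ?case
        using elim by (simp add: power2_eq_square)
    qed
    show "((\<lambda>t. K * t) \<longlongrightarrow> 0) (at_right 0)"
      by (intro tendsto_mult_right_zero tendsto_ident_at)
  qed
  then show ?thesis
    using tendsto_unique[OF _ diff_quot_tendsto] by (simp add: LIM_zero_iff)
qed

lemma dir_deriv_zero: "dir_deriv x 0 = 0"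
  by (rule dir_deriv_unique[where K = 0]) simp

lemma dir_deriv_scale_pos:
  assumes "0 < c"
  shows "dir_deriv x (c *\<^sub>R h) = c *\<^sub>R dir_deriv x h"
proof (rule dir_deriv_unique)
  fix t :: real
  assume "0 < t" "t \<le> 1"
  then show "norm (g (x + t *\<^sub>R c *\<^sub>R h) - g x - t *\<^sub>R c *\<^sub>R dir_deriv x h)
      \<le> L / 2 * (norm h)\<^sup>2 * c\<^sup>2 * t\<^sup>2"
    using dir_deriv_remainder[of "t * c" x h] assms by (simp add: power_mult_distrib mult_ac)
qed

lemma jensen_defect_midpoint:
  "norm (g ((1 / 2) *\<^sub>R (a + b)) - (1 / 2) *\<^sub>R (g a + g b)) \<le> L / 8 * (norm (a - b))\<^sup>2"
  using jensen_defect[of "1 / 2" a b] by (simp add: scaleR_add_right)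

lemma dir_deriv_add: "dir_deriv x (h + k) = dir_deriv x h + dir_deriv x k"
proof (rule dir_deriv_unique)
  fix t :: real
  assume "0 < t" "t \<le> 1"
  define a b where "a = x + (2 * t) *\<^sub>R h" and "b = x + (2 * t) *\<^sub>R k"
  have mid: "norm (g (x + t *\<^sub>R (h + k)) - (1 / 2) *\<^sub>R (g a + g b)) \<le> L / 2 * (norm (h - k))\<^sup>2 * t\<^sup>2"
  proof -
    have "(1 / 2) *\<^sub>R (a + b) = x + t *\<^sub>R (h + k)"
      by (simp add: a_def b_def algebra_simps flip: scaleR_add_left)
    moreover have "a - b = (2 * t) *\<^sub>R (h - k)"
      by (simp add: a_def b_def algebra_simps)
    ultimately show ?thesis
      using jensen_defect_midpoint[of a b] \<open>0 < t\<close> by (simp add: power_mult_distrib mult_ac)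
  qed
  have "g (x + t *\<^sub>R (h + k)) - g x - t *\<^sub>R (dir_deriv x h + dir_deriv x k)
      = (g (x + t *\<^sub>R (h + k)) - (1 / 2) *\<^sub>R (g a + g b))
        + (1 / 2) *\<^sub>R (g a - g x - (2 * t) *\<^sub>R dir_deriv x h)
        + (1 / 2) *\<^sub>R (g b - g x - (2 * t) *\<^sub>R dir_deriv x k)"
    by (simp add: algebra_simps flip: scaleR_2)
  also have "norm \<dots> \<le> norm (g (x + t *\<^sub>R (h + k)) - (1 / 2) *\<^sub>R (g a + g b))
      + 1 / 2 * norm (g a - g x - (2 * t) *\<^sub>R dir_deriv x h)
      + 1 / 2 * norm (g b - g x - (2 * t) *\<^sub>R dir_deriv x k)"
    by (intro norm_triangle_mono) simp_all
  also have "\<dots> \<le> L / 2 * (norm (h - k))\<^sup>2 * t\<^sup>2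
      + 1 / 2 * (L / 2 * (norm h)\<^sup>2 * (2 * t)\<^sup>2) + 1 / 2 * (L / 2 * (norm k)\<^sup>2 * (2 * t)\<^sup>2)"
    using mid dir_deriv_remainder[of "2 * t" x h] dir_deriv_remainder[of "2 * t" x k] \<open>0 < t\<close>
    unfolding a_def b_def by linarith
  also have "\<dots> = (L / 2 * (norm (h - k))\<^sup>2 + L * (norm h)\<^sup>2 + L * (norm k)\<^sup>2) * t\<^sup>2"
    by (simp add: power2_eq_square algebra_simps)
  finally show "norm (g (x + t *\<^sub>R (h + k)) - g x - t *\<^sub>R (dir_deriv x h + dir_deriv x k))
      \<le> (L / 2 * (norm (h - k))\<^sup>2 + L * (norm h)\<^sup>2 + L * (norm k)\<^sup>2) * t\<^sup>2" .
qed

lemma dir_deriv_minus: "dir_deriv x (- h) = - dir_deriv x h"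
  using dir_deriv_add[of x h "- h"] by (metis dir_deriv_zero minus_unique add.right_inverse)

lemma dir_deriv_scale: "dir_deriv x (c *\<^sub>R h) = c *\<^sub>R dir_deriv x h"
proof -
  consider "0 < c" | "c = 0" | "c < 0" by linarith
  then show ?thesis
  proof cases
    case 3
    then have "dir_deriv x (- c *\<^sub>R h) = - c *\<^sub>R dir_deriv x h"
      by (intro dir_deriv_scale_pos) simp
    then show ?thesis
      by (metis dir_deriv_minus scaleR_minus_left minus_minus)
  qed (simp_all add: dir_deriv_scale_pos dir_deriv_zero)
qed

lemma linear_dir_deriv: "linear (dir_deriv x)"
  by (rule linearI) (simp_all add: dir_deriv_add dir_deriv_scale)

lemma bounded_linear_dir_deriv_if_locally_bounded:
  assumes "0 < r" and bound: "\<And>y. norm (y - x) \<le> r \<Longrightarrow> norm (g y - g x) \<le> M"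
  shows "bounded_linear (dir_deriv x)"
proof -
  have bound_h: "norm (dir_deriv x h) \<le> norm h * ((M + L / 2 * r\<^sup>2) / r)" for h
  proof (cases "h = 0")
    case False
    define w where "w = (r / norm h) *\<^sub>R h"
    have "norm w = r"
      using False \<open>0 < r\<close> by (simp add: w_def)
    have "norm (dir_deriv x w) \<le> norm (g (x + w) - g x) + norm (g (x + w) - g x - dir_deriv x w)"
      by (rule norm_triangle_ineq4[of "g (x + w) - g x" "g (x + w) - g x - dir_deriv x w", simplified])
    also have "\<dots> \<le> M + L / 2 * r\<^sup>2"
      using bound[of "x + w"] dir_deriv_taylor[of "x + w" x] \<open>norm w = r\<close> by simp
    finally have "r / norm h * norm (dir_deriv x h) \<le> M + L / 2 * r\<^sup>2"
      using \<open>0 < r\<close> by (simp add: w_def dir_deriv_scale)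
    then show ?thesis
      using False \<open>0 < r\<close> by (simp add: field_simps)
  qed (simp add: dir_deriv_zero)
  show ?thesis
    by (rule bounded_linear_intro[OF _ _ bound_h]) (simp_all add: dir_deriv_add dir_deriv_scale)
qed

lemma has_derivative_dir_deriv:
  assumes "bounded_linear (dir_deriv x)"
  shows "(g has_derivative dir_deriv x) (at x)"
  unfolding has_derivative_iff_norm
proof (intro conjI assms, rule Lim_null_comparison[where g = "\<lambda>y. L / 2 * norm (y - x)"],
    intro always_eventually allI)
  fix y
  show "norm (norm (g y - g x - dir_deriv x (y - x)) / norm (y - x)) \<le> L / 2 * norm (y - x)"
  proof (cases "y = x")
    case False
    then show ?thesis
      using dir_deriv_taylor[of y x] by (simp add: divide_le_eq power2_eq_square mult.assoc)
  qed simp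
  have "((\<lambda>y. L / 2 * norm (y - x)) \<longlongrightarrow> L / 2 * norm (x - x)) (at x)"
    by (intro tendsto_intros)
  then show "((\<lambda>y. L / 2 * norm (y - x)) \<longlongrightarrow> 0) (at x)"
    by simp
qed

end

lemma parallelogram_law:
  fixes a b :: "'a::real_inner"
  shows "(norm (a + b))\<^sup>2 + (norm (a - b))\<^sup>2 = 2 * ((norm a)\<^sup>2 + (norm b)\<^sup>2)"
  by (simp add: power2_norm_eq_inner inner_add_left inner_add_right inner_diff_left inner_diff_right
      inner_commute)

locale jensen_defect_inner = jensen_defect g L
  for g :: "'a::real_inner \<Rightarrow> 'b::{real_normed_vector, complete_space}" and L
begin

lemma dir_deriv_diff_le:
  "norm (dir_deriv x v - dir_deriv y v) \<le> L * ((norm v)\<^sup>2 + (norm (x - y))\<^sup>2 / 4)"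
proof -
  define u m where "u = (1 / 2) *\<^sub>R (x - y)" and "m = (1 / 2) *\<^sub>R (x + y)"
  have x: "x = m + u" and y: "y = m - u"
    by (simp_all add: u_def m_def algebra_simps flip: scaleR_add_left)
  define e where "e z p = g z - g p - dir_deriv p (z - p)" for z p
  have lin: "dir_deriv p (m + v - p) - dir_deriv p (m - v - p) = 2 *\<^sub>R dir_deriv p v" for p
  proof -
    have "dir_deriv p (m + v - p) - dir_deriv p (m - v - p) = dir_deriv p ((m + v - p) - (m - v - p))"
      by (rule linear_diff[OF linear_dir_deriv, symmetric])
    also have "(m + v - p) - (m - v - p) = 2 *\<^sub>R v"
      by (simp add: scaleR_2)
    finally show ?thesis
      by (simp add: dir_deriv_scale)
  qed
  have d: "m + v - x = v - u" "m + v - y = v + u" "m - v - x = - (v + u)" "m - v - y = - (v - u)"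
    by (simp_all add: x y algebra_simps)
  have taylor: "norm (e (m + v) x) \<le> L / 2 * (norm (v - u))\<^sup>2" "norm (e (m + v) y) \<le> L / 2 * (norm (v + u))\<^sup>2"
    "norm (e (m - v) x) \<le> L / 2 * (norm (v + u))\<^sup>2" "norm (e (m - v) y) \<le> L / 2 * (norm (v - u))\<^sup>2"
    using dir_deriv_taylor[of "m + v" x] dir_deriv_taylor[of "m + v" y]
      dir_deriv_taylor[of "m - v" x] dir_deriv_taylor[of "m - v" y]
    unfolding e_def d norm_minus_cancel by auto
  have "2 *\<^sub>R (dir_deriv x v - dir_deriv y v)
      = (dir_deriv x (m + v - x) - dir_deriv x (m - v - x)) - (dir_deriv y (m + v - y) - dir_deriv y (m - v - y))"
    by (simp add: lin scaleR_right_diff_distrib)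
  also have "\<dots> = - e (m + v) x + e (m + v) y + e (m - v) x + - e (m - v) y"
    by (simp add: e_def)
  finally have "2 * norm (dir_deriv x v - dir_deriv y v)
      = norm (- e (m + v) x + e (m + v) y + e (m - v) x + - e (m - v) y)"
    by (metis norm_scaleR abs_numeral)
  also have "\<dots> \<le> norm (e (m + v) x) + norm (e (m + v) y) + norm (e (m - v) x) + norm (e (m - v) y)"
    by (intro norm_triangle_mono) simp_all
  also have "\<dots> \<le> L * ((norm (v + u))\<^sup>2 + (norm (v - u))\<^sup>2)"
    using taylor by (simp add: algebra_simps)
  also have "\<dots> = 2 * (L * ((norm v)\<^sup>2 + (norm (x - y))\<^sup>2 / 4))"
    by (simp add: parallelogram_law u_def power_divide)
  finally show ?thesis
    by simp
qed

lemma dir_deriv_lipschitz: "norm (dir_deriv x h - dir_deriv y h) \<le> L * norm (x - y) * norm h"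
proof (cases "h = 0 \<or> x = y")
  case False
  \<comment> \<open>this scale balances the two terms of the bound of dir_deriv_diff_le\<close>
  define c where "c = norm (x - y) / (2 * norm h)"
  have "0 < c"
    using False by (simp add: c_def)
  have "c * norm (dir_deriv x h - dir_deriv y h) = norm (dir_deriv x (c *\<^sub>R h) - dir_deriv y (c *\<^sub>R h))"
    using \<open>0 < c\<close> by (simp add: dir_deriv_scale flip: scaleR_right_diff_distrib)
  also have "\<dots> \<le> L * ((norm (c *\<^sub>R h))\<^sup>2 + (norm (x - y))\<^sup>2 / 4)"
    by (rule dir_deriv_diff_le)
  also have "\<dots> = c * (L * norm (x - y) * norm h)"
    using False by (simp add: c_def power2_eq_square field_simps)
  finally show ?thesis
    using \<open>0 < c\<close> by simp
qed (auto simp: dir_deriv_zero)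

end

lemma norm_le_if_inner_le_on_sphere:
  fixes v :: "'a::real_inner"
  assumes "0 < r" "0 \<le> M" and bound: "\<And>k. norm k = r \<Longrightarrow> v \<bullet> k \<le> r * M"
  shows "norm v \<le> M"
proof (cases "v = 0")
  case False
  have "v \<bullet> ((r / norm v) *\<^sub>R v) = r * norm v"
    using False by (simp add: power2_norm_eq_inner[symmetric] power2_eq_square)
  then have "r * norm v \<le> r * M"
    using bound[of "(r / norm v) *\<^sub>R v"] False \<open>0 < r\<close> by simp
  then show ?thesis
    using \<open>0 < r\<close> by simp
qed (simp add: assms)

locale gradient_jensen_defect = jensen_defect_inner g L
  for g :: "'a::{real_inner, complete_space} \<Rightarrow> 'a" and L +
  fixes f :: "'a \<Rightarrow> real"
  assumes has_gradient: "\<And>x. (f has_derivative (\<lambda>h. g x \<bullet> h)) (at x)"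
begin

lemma second_order_taylor:
  "\<bar>f (p + k) - f p - g p \<bullet> k - dir_deriv p k \<bullet> k / 2\<bar> \<le> L / 2 * norm k ^ 3"
proof -
  define c where "c = dir_deriv p k \<bullet> k"
  define \<psi> where "\<psi> t = f (p + t *\<^sub>R k) - t * (g p \<bullet> k) - t * t / 2 * c" for t
  have f_line: "((\<lambda>t. f (p + t *\<^sub>R k)) has_real_derivative g (p + t *\<^sub>R k) \<bullet> k) (at t)" for t
  proof (rule has_derivative_imp_has_field_derivative)
    have "((\<lambda>t. p + t *\<^sub>R k) has_derivative (\<lambda>s. s *\<^sub>R k)) (at t)"
      by (auto intro!: derivative_eq_intros)
    then show "((\<lambda>t. f (p + t *\<^sub>R k)) has_derivative (\<lambda>s. g (p + t *\<^sub>R k) \<bullet> (s *\<^sub>R k))) (at t)"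
      by (rule has_derivative_compose[OF _ has_gradient])
  qed simp
  have "(\<psi> has_real_derivative (g (p + t *\<^sub>R k) - g p - t *\<^sub>R dir_deriv p k) \<bullet> k) (at t)" for t
    unfolding \<psi>_def by (auto intro!: derivative_eq_intros f_line simp: c_def inner_diff_left algebra_simps)
  then obtain z where z: "0 < z" "z < 1"
    and mvt: "\<psi> 1 - \<psi> 0 = (g (p + z *\<^sub>R k) - g p - z *\<^sub>R dir_deriv p k) \<bullet> k"
    using MVT2[of 0 1 \<psi> "\<lambda>t. (g (p + t *\<^sub>R k) - g p - t *\<^sub>R dir_deriv p k) \<bullet> k"] by auto
  have "\<bar>\<psi> 1 - \<psi> 0\<bar> \<le> norm (g (p + z *\<^sub>R k) - g p - z *\<^sub>R dir_deriv p k) * norm k"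
    unfolding mvt by (rule Cauchy_Schwarz_ineq2)
  also have "\<dots> \<le> (L / 2 * (norm k)\<^sup>2 * z\<^sup>2) * norm k"
    using dir_deriv_remainder[of z p k] z by (intro mult_right_mono) auto
  also have "\<dots> \<le> (L / 2 * (norm k)\<^sup>2 * 1) * norm k"
    using z L_nonneg by (intro mult_right_mono mult_left_mono) (auto simp: power_le_one)
  also have "\<dots> = L / 2 * norm k ^ 3"
    by (simp add: power2_eq_square power3_eq_cube)
  also have "\<psi> 1 - \<psi> 0 = f (p + k) - f p - g p \<bullet> k - dir_deriv p k \<bullet> k / 2"
    by (simp add: \<psi>_def c_def)
  finally show ?thesis .
qed

(* In the splitting of (g y - g x) \<bullet> k into first-order remainders R of f, the two remainders at x
   are small by differentiability of f at x; R y k is compared with R x k through the second-order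
   expansions at y and at x. *)
lemma gradient_diff_inner_le:
  assumes "0 < r"
    and small: "\<And>k. norm k < 3 * r \<Longrightarrow> \<bar>f (x + k) - f x - g x \<bullet> k\<bar> \<le> norm k"
    and "norm (y - x) \<le> r" "norm k = r"
  shows "(g y - g x) \<bullet> k \<le> r * (4 + 3 / 2 * L * r\<^sup>2)"
proof -
  define R where "R p k = f (p + k) - f p - g p \<bullet> k" for p k
  have split: "(g y - g x) \<bullet> k = R x (y - x + k) - R x (y - x) - R y k"
    by (simp add: R_def inner_diff_left inner_add_right algebra_simps)
  have "norm (y - x + k) \<le> 2 * r"
    using norm_triangle_ineq[of "y - x" k] assms by linarith
  then have "norm (y - x + k) < 3 * r" "norm (y - x) < 3 * r" "norm k < 3 * r"
    using assms by auto
  then have R1: "\<bar>R x (y - x + k)\<bar> \<le> 2 * r" and R2: "\<bar>R x (y - x)\<bar> \<le> r" and R3: "\<bar>R x k\<bar> \<le> r"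
    using small[of "y - x + k"] small[of "y - x"] small[of k] \<open>norm (y - x + k) \<le> 2 * r\<close> assms
    unfolding R_def by fastforce+
  have "L * norm (y - x) * norm k \<le> L * r * r"
    using assms L_nonneg by (auto intro!: mult_right_mono mult_left_mono)
  then have "norm (dir_deriv y k - dir_deriv x k) \<le> L * r * r"
    using dir_deriv_lipschitz[of y k x] by linarith
  then have "\<bar>dir_deriv y k \<bullet> k - dir_deriv x k \<bullet> k\<bar> \<le> L * r * r * r"
    using Cauchy_Schwarz_ineq2[of "dir_deriv y k - dir_deriv x k" k] assms
    by (metis inner_diff_left mult_right_mono norm_ge_zero order_trans)
  then have Ry: "\<bar>R y k\<bar> \<le> \<bar>R x k\<bar> + 3 / 2 * L * r ^ 3"
    using second_order_taylor[of y k] second_order_taylor[of x k]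
    unfolding R_def power3_eq_cube \<open>norm k = r\<close> by arith
  have "(g y - g x) \<bullet> k \<le> 2 * r + r + (r + 3 / 2 * L * r ^ 3)"
    using split R1 R2 R3 Ry by arith
  also have "\<dots> = r * (4 + 3 / 2 * L * r\<^sup>2)"
    by (simp add: power2_eq_square power3_eq_cube algebra_simps)
  finally show ?thesis .
qed

lemma gradient_locally_bounded:
  obtains r M where "0 < r" "\<And>y. norm (y - x) \<le> r \<Longrightarrow> norm (g y - g x) \<le> M"
proof -
  obtain \<delta> where "0 < \<delta>" and small: "\<And>k. norm k < \<delta> \<Longrightarrow> \<bar>f (x + k) - f x - g x \<bullet> k\<bar> \<le> norm k"
    using has_gradient[of x] unfolding has_derivative_at_alt
    by (metis add_diff_cancel_left' mult_1 real_norm_def zero_less_one)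
  define r where "r = \<delta> / 3"
  have "0 < r"
    using \<open>0 < \<delta>\<close> by (simp add: r_def)
  show ?thesis
  proof (rule that[OF \<open>0 < r\<close>], rule norm_le_if_inner_le_on_sphere[OF \<open>0 < r\<close>])
    fix y k :: 'a
    assume "norm (y - x) \<le> r" "norm k = r"
    then show "(g y - g x) \<bullet> k \<le> r * (4 + 3 / 2 * L * r\<^sup>2)"
      using small \<open>0 < r\<close> by (intro gradient_diff_inner_le) (auto simp: r_def)
  qed (use L_nonneg in simp)
qed

lemma bounded_linear_dir_deriv: "bounded_linear (dir_deriv x)"
  using gradient_locally_bounded[of x] bounded_linear_dir_deriv_if_locally_bounded by metis

definition hessian :: "'a \<Rightarrow> 'a \<Rightarrow>\<^sub>L 'a" where
  "hessian x = Blinfun (dir_deriv x)"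

lemma blinfun_apply_hessian: "blinfun_apply (hessian x) = dir_deriv x"
  by (simp add: hessian_def bounded_linear_Blinfun_apply bounded_linear_dir_deriv)

lemma has_derivative_gradient: "(g has_derivative blinfun_apply (hessian x)) (at x)"
  unfolding blinfun_apply_hessian by (rule has_derivative_dir_deriv[OF bounded_linear_dir_deriv])

lemma hessian_lipschitz: "norm (hessian x - hessian y) \<le> L * norm (x - y)"
  by (rule norm_blinfun_bound)
    (simp_all add: L_nonneg blinfun.diff_left blinfun_apply_hessian dir_deriv_lipschitz)

end

theorem corollary1p3:
  fixes f :: "'a::{real_inner, complete_space} \<Rightarrow> real"
    and gradf :: "'a \<Rightarrow> 'a"
    and L :: real
  assumes L_pos: "L > 0"
    and grad: "\<And>x. (f has_derivative (\<lambda>h. gradf x \<bullet> h)) (at x)"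
    and cond: "\<And>(n::nat) (x :: nat \<Rightarrow> 'a) (lam :: nat \<Rightarrow> real).
                 n \<ge> 1 \<Longrightarrow> (\<forall>i<n. lam i \<ge> 0) \<Longrightarrow> (\<Sum>i<n. lam i) = 1 \<Longrightarrow>
                 norm (gradf (\<Sum>i<n. lam i *\<^sub>R x i) - (\<Sum>i<n. lam i *\<^sub>R gradf (x i)))
                   \<le> L / 2 * (\<Sum>i<n. \<Sum>j\<in>{i<..<n}. lam i * lam j * (norm (x i - x j))\<^sup>2)"
  shows "\<exists>H :: 'a \<Rightarrow> ('a \<Rightarrow>\<^sub>L 'a).
           (\<forall>x. (gradf has_derivative blinfun_apply (H x)) (at x)) \<and>
           (\<forall>x y. norm (H x - H y) \<le> L * norm (x - y))"
proof -
  interpret gradient_jensen_defect gradf L f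
  proof unfold_locales
    show "0 \<le> L"
      using L_pos by simp
  qed (rule jensen_defect_two_points[OF cond], assumption+, rule grad)
  show ?thesis
    using has_derivative_gradient hessian_lipschitz by blast
qed

end
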